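(* Let $G$ be a Borel groupoid which is the increasing union of a sequence $(G_n)$ of proper Borel subgroupoids. Then $G$ is Borel amenable.
   Context: All Borel spaces are analytic. For a Borel groupoid $H$ with $H$ acting on itself by left multiplication and on $H^{(0)}$ by $\gamma\cdot s(\gamma)=r(\gamma)$: $H$ is proper if there is a Borel system $\{m^u\}_{u\in H^{(0)}}$ of probability measures, $m^u$ supported on $H^u=r^{-1}(u)$, $u\mapsto\int f\,dm^u$ Borel for nonnegative Borel $f$, with $\gamma\cdot m^{s(\gamma)}=m^{r(\gamma)}$. $G$ is Borel amenable if there is a sequence of such Borel systems $m_n$ of probability measures on $G$ with $\|\gamma\cdot m_n^{s(\gamma)}-m_n^{r(\gamma)}\|_1\to0$ for every $\gamma\in G$ (total variation norm). *)

theory Defs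
  imports "HOL-Probability.Probability"
begin

text \<open>Analytic Borel space: Borel isomorphic to an analytic subset of the reals
  (i.e. empty or a continuous image of the Baire space nat => nat).  Every Polish
  space Borel-embeds into the reals, so this is the usual notion.\<close>
definition analytic_space :: "'a measure \<Rightarrow> bool" where
  "analytic_space M \<longleftrightarrow>
     (\<exists>(A::real set) g.
        (A = {} \<or> (\<exists>h :: (nat \<Rightarrow> nat) \<Rightarrow> real. continuous_on UNIV h \<and> A = range h)) \<and>
        bij_betw g (space M) A \<and>
        g \<in> measurable M (restrict_space borel A) \<and>
        inv_into (space M) g \<in> measurable (restrict_space borel A) M)"

text \<open>A Borel groupoid: the underlying Borel space is M (so G = space M),
  U is the unit space G^(0), r s are range and source, mul the partial
  multiplication (meaningful on composable pairs) and iv the inverse.\<close>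
definition composable_pairs :: "'a measure \<Rightarrow> ('a \<Rightarrow> 'a) \<Rightarrow> ('a \<Rightarrow> 'a) \<Rightarrow> ('a \<times> 'a) set" where
  "composable_pairs M r s = {(g, h). g \<in> space M \<and> h \<in> space M \<and> s g = r h}"

definition groupoid :: "'a set \<Rightarrow> 'a set \<Rightarrow> ('a \<Rightarrow> 'a) \<Rightarrow> ('a \<Rightarrow> 'a)
    \<Rightarrow> ('a \<Rightarrow> 'a \<Rightarrow> 'a) \<Rightarrow> ('a \<Rightarrow> 'a) \<Rightarrow> bool" where
  "groupoid G U r s mul iv \<longleftrightarrow>
     U \<subseteq> G \<and>
     (\<forall>g\<in>G. r g \<in> U \<and> s g \<in> U) \<and>
     (\<forall>u\<in>U. r u = u \<and> s u = u) \<and>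
     (\<forall>g\<in>G. \<forall>h\<in>G. s g = r h \<longrightarrow>
        mul g h \<in> G \<and> r (mul g h) = r g \<and> s (mul g h) = s h) \<and>
     (\<forall>g\<in>G. \<forall>h\<in>G. \<forall>k\<in>G. s g = r h \<longrightarrow> s h = r k \<longrightarrow>
        mul (mul g h) k = mul g (mul h k)) \<and>
     (\<forall>g\<in>G. mul (r g) g = g \<and> mul g (s g) = g) \<and>
     (\<forall>g\<in>G. iv g \<in> G \<and> r (iv g) = s g \<and> s (iv g) = r g \<and>
        mul g (iv g) = r g \<and> mul (iv g) g = s g)"

definition borel_groupoid :: "'a measure \<Rightarrow> 'a set \<Rightarrow> ('a \<Rightarrow> 'a) \<Rightarrow> ('a \<Rightarrow> 'a)
    \<Rightarrow> ('a \<Rightarrow> 'a \<Rightarrow> 'a) \<Rightarrow> ('a \<Rightarrow> 'a) \<Rightarrow> bool" where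
  "borel_groupoid M U r s mul iv \<longleftrightarrow>
     groupoid (space M) U r s mul iv \<and>
     U \<in> sets M \<and>
     r \<in> measurable M M \<and> s \<in> measurable M M \<and> iv \<in> measurable M M \<and>
     composable_pairs M r s \<in> sets (M \<Otimes>\<^sub>M M) \<and>
     (\<lambda>(g, h). mul g h) \<in> measurable (restrict_space (M \<Otimes>\<^sub>M M) (composable_pairs M r s)) M"

definition borel_subgroupoid :: "'a measure \<Rightarrow> ('a \<Rightarrow> 'a) \<Rightarrow> ('a \<Rightarrow> 'a)
    \<Rightarrow> ('a \<Rightarrow> 'a \<Rightarrow> 'a) \<Rightarrow> ('a \<Rightarrow> 'a) \<Rightarrow> 'a set \<Rightarrow> bool" where
  "borel_subgroupoid M r s mul iv H \<longleftrightarrow>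
     H \<in> sets M \<and>
     (\<forall>g\<in>H. \<forall>h\<in>H. s g = r h \<longrightarrow> mul g h \<in> H) \<and>
     (\<forall>g\<in>H. iv g \<in> H)"

text \<open>Left translate of a measure: (gamma . m)(A) = m({h in H^(s gamma). gamma h in A}).\<close>
definition left_preimage :: "('a \<Rightarrow> 'a) \<Rightarrow> ('a \<Rightarrow> 'a \<Rightarrow> 'a) \<Rightarrow> 'a set \<Rightarrow> 'a \<Rightarrow> 'a \<Rightarrow> 'a set \<Rightarrow> 'a set" where
  "left_preimage r mul H u \<gamma> A = {h \<in> H. r h = u \<and> mul \<gamma> h \<in> A}"

definition borel_prob_system :: "'a measure \<Rightarrow> ('a \<Rightarrow> 'a) \<Rightarrow> 'a set \<Rightarrow> 'a set
    \<Rightarrow> ('a \<Rightarrow> 'a measure) \<Rightarrow> bool" where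
  "borel_prob_system M r H H0 m \<longleftrightarrow>
     (\<forall>u\<in>H0. prob_space (m u) \<and> sets (m u) = sets (restrict_space M H) \<and>
        emeasure (m u) {h \<in> H. r h \<noteq> u} = 0) \<and>
     (\<forall>f \<in> borel_measurable (restrict_space M H).
        (\<lambda>u. \<integral>\<^sup>+ x. f x \<partial>(m u)) \<in> borel_measurable (restrict_space M H0))"

definition proper_subgroupoid :: "'a measure \<Rightarrow> 'a set \<Rightarrow> ('a \<Rightarrow> 'a) \<Rightarrow> ('a \<Rightarrow> 'a)
    \<Rightarrow> ('a \<Rightarrow> 'a \<Rightarrow> 'a) \<Rightarrow> 'a set \<Rightarrow> bool" where
  "proper_subgroupoid M U r s mul H \<longleftrightarrow>
     (\<exists>m. borel_prob_system M r H (H \<inter> U) m \<and>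
        (\<forall>\<gamma>\<in>H. \<forall>A \<in> sets (restrict_space M H).
           emeasure (m (s \<gamma>)) (left_preimage r mul H (s \<gamma>) \<gamma> A) = emeasure (m (r \<gamma>)) A))"

definition tv_norm :: "'a measure \<Rightarrow> ('a set \<Rightarrow> real) \<Rightarrow> ('a set \<Rightarrow> real) \<Rightarrow> ennreal" where
  "tv_norm M \<mu> \<nu> =
     (SUP P \<in> {P. finite P \<and> P \<subseteq> sets M \<and> disjoint P \<and> \<Union>P = space M}.
        \<Sum>A\<in>P. ennreal \<bar>\<mu> A - \<nu> A\<bar>)"

definition borel_amenable :: "'a measure \<Rightarrow> 'a set \<Rightarrow> ('a \<Rightarrow> 'a) \<Rightarrow> ('a \<Rightarrow> 'a)
    \<Rightarrow> ('a \<Rightarrow> 'a \<Rightarrow> 'a) \<Rightarrow> bool" where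
  "borel_amenable M U r s mul \<longleftrightarrow>
     (\<exists>m :: nat \<Rightarrow> 'a \<Rightarrow> 'a measure.
        (\<forall>n. borel_prob_system M r (space M) U (m n)) \<and>
        (\<forall>\<gamma>\<in>space M.
           (\<lambda>n. tv_norm M
                  (\<lambda>A. measure (m n (s \<gamma>)) (left_preimage r mul (space M) (s \<gamma>) \<gamma> A))
                  (\<lambda>A. measure (m n (r \<gamma>)) A)) \<longlonglongrightarrow> 0))"

end

theory Submission
  imports Defs
begin

text \<open>Each proper \<open>G\<^sub>n\<close> carries a Borel system of probability measures that is exactly
  invariant under left translation by arrows of \<open>G\<^sub>n\<close>. Pushing it forward to \<open>G\<close>, and using
  Dirac measures at the units outside \<open>G\<^sub>n\<close>, gives a Borel system on \<open>G\<close>. Every arrow lies in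
  \<open>G\<^sub>n\<close> for all large \<open>n\<close>, so from then on the total variation in the definition of amenability
  vanishes identically.\<close>

lemma analytic_space_singleton_sets:
  assumes "analytic_space M" "u \<in> space M"
  shows "{u} \<in> sets M"
proof -
  from assms(1) obtain A :: "real set" and g where
    bij: "bij_betw g (space M) A" and g: "g \<in> measurable M (restrict_space borel A)"
    unfolding analytic_space_def by blast
  have "A \<inter> {g u} \<in> sets (restrict_space borel A)"
    unfolding sets_restrict_space by simp
  hence "g -` (A \<inter> {g u}) \<inter> space M \<in> sets M"
    by (rule measurable_sets[OF g])
  moreover have "g -` (A \<inter> {g u}) \<inter> space M = {u}"
    using bij_betw_imp_inj_on[OF bij] bij_betw_apply[OF bij assms(2)] assms(2)
    by (auto dest: inj_onD)
  ultimately show ?thesis by simp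
qed

lemma sets_restrict_space_space: "sets (restrict_space M (space M)) = sets M"
  by (auto simp: sets_restrict_space_iff dest: sets.sets_into_space[THEN subsetD])

lemma borel_subgroupoid_units:
  assumes "groupoid (space M) U r s mul iv" "borel_subgroupoid M r s mul iv H" "\<gamma> \<in> H"
  shows "r \<gamma> \<in> H \<inter> U" "s \<gamma> \<in> H \<inter> U"
proof -
  have H: "H \<subseteq> space M" "iv \<gamma> \<in> H" and clos: "\<And>x y. x \<in> H \<Longrightarrow> y \<in> H \<Longrightarrow> s x = r y \<Longrightarrow> mul x y \<in> H"
    using assms(2,3) sets.sets_into_space unfolding borel_subgroupoid_def by blast+
  have "\<gamma> \<in> space M" using H assms(3) by blast
  then have "mul \<gamma> (iv \<gamma>) = r \<gamma>" "mul (iv \<gamma>) \<gamma> = s \<gamma>" "s \<gamma> = r (iv \<gamma>)" "s (iv \<gamma>) = r \<gamma>"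
    and "r \<gamma> \<in> U" "s \<gamma> \<in> U"
    using assms(1) unfolding groupoid_def by auto
  then show "r \<gamma> \<in> H \<inter> U" "s \<gamma> \<in> H \<inter> U"
    using clos[OF assms(3) H(2)] clos[OF H(2) assms(3)] by auto
qed

text \<open>Analyticity is used only to make the fibre \<open>r\<^sup>-\<^sup>1(s \<gamma>)\<close> Borel, the domain on which
  left multiplication by \<open>\<gamma>\<close> is a measurable map.\<close>

lemma left_preimage_in_sets:
  assumes "analytic_space M" "borel_groupoid M U r s mul iv"
    and "\<gamma> \<in> space M" "A \<in> sets M"
  shows "left_preimage r mul (space M) (s \<gamma>) \<gamma> A \<in> sets M"
proof -
  define R where "R = r -` {s \<gamma>} \<inter> space M"
  have "groupoid (space M) U r s mul iv" and "U \<in> sets M" and r: "r \<in> measurable M M"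
    and mul: "(\<lambda>(g, h). mul g h) \<in> measurable (restrict_space (M \<Otimes>\<^sub>M M) (composable_pairs M r s)) M"
    using assms(2) unfolding borel_groupoid_def by blast+
  then have "s \<gamma> \<in> space M"
    using assms(3) sets.sets_into_space unfolding groupoid_def by blast
  then have R: "R \<in> sets M"
    unfolding R_def by (rule measurable_sets[OF r analytic_space_singleton_sets[OF assms(1)]])
  have "(\<lambda>h. (\<gamma>, h)) \<in> measurable (restrict_space M R) (restrict_space (M \<Otimes>\<^sub>M M) (composable_pairs M r s))"
    using assms(3) by (intro measurable_restrict_space3) (auto simp: R_def composable_pairs_def)
  from measurable_comp[OF this mul]
  have "(\<lambda>h. mul \<gamma> h) \<in> measurable (restrict_space M R) M" by (simp add: comp_def)
  from measurable_sets[OF this assms(4)]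
  have "left_preimage r mul (space M) (s \<gamma>) \<gamma> A \<in> sets (restrict_space M R)"
    by (simp add: left_preimage_def space_restrict_space R_def Collect_conj_eq Int_ac vimage_def)
  then show ?thesis
    using R by (simp add: sets_restrict_space_iff)
qed

text \<open>At a unit \<open>u \<notin> H\<close> the Dirac measure is supported on \<open>r\<^sup>-\<^sup>1(u)\<close> because \<open>r u = u\<close>.\<close>

definition extend_system :: "'a measure \<Rightarrow> 'a set \<Rightarrow> ('a \<Rightarrow> 'a measure) \<Rightarrow> 'a \<Rightarrow> 'a measure" where
  "extend_system M H m u = (if u \<in> H then distr (m u) M (\<lambda>x. x) else return M u)"

lemma
  assumes "borel_prob_system M r H (H \<inter> U) m" "H \<in> sets M" "u \<in> H \<inter> U"
  shows borel_prob_system_space: "space (m u) = H"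
    and borel_prob_system_id_measurable: "(\<lambda>x. x) \<in> measurable (m u) M"
proof -
  have sets: "sets (m u) = sets (restrict_space M H)"
    using assms(1,3) unfolding borel_prob_system_def by blast
  then show "space (m u) = H"
    using sets_eq_imp_space_eq[OF sets] assms(2) by simp
  show "(\<lambda>x. x) \<in> measurable (m u) M"
    unfolding measurable_cong_sets[OF sets refl] by (rule measurable_restrict_space1) simp
qed

lemma measure_extend_system:
  assumes "borel_prob_system M r H (H \<inter> U) m" "H \<in> sets M" "u \<in> H \<inter> U" "A \<in> sets M"
  shows "measure (extend_system M H m u) A = measure (m u) (A \<inter> H)"
  using assms by (simp add: extend_system_def measure_distr borel_prob_system_id_measurable
      borel_prob_system_space)

lemma borel_prob_system_extend_system:
  assumes sys: "borel_prob_system M r H (H \<inter> U) m" and H: "H \<in> sets M"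
    and U: "U \<in> sets M" and units: "\<And>u. u \<in> U \<Longrightarrow> r u = u"
  shows "borel_prob_system M r (space M) U (extend_system M H m)"
  unfolding borel_prob_system_def
proof (intro conjI ballI)
  have UM: "U \<subseteq> space M" "H \<subseteq> space M"
    using U H by (auto dest: sets.sets_into_space)
  fix u assume u: "u \<in> U"
  show "sets (extend_system M H m u) = sets (restrict_space M (space M))"
    by (simp add: extend_system_def sets_restrict_space_space)
  show "prob_space (extend_system M H m u)"
  proof (cases "u \<in> H")
    case True
    then show ?thesis
      using sys u prob_space.prob_space_distr[OF _ borel_prob_system_id_measurable[OF sys H]]
      by (auto simp: extend_system_def borel_prob_system_def)
  next
    case False
    then show ?thesis using u UM by (auto simp: extend_system_def prob_space_return)
  qed
  show "emeasure (extend_system M H m u) {h \<in> space M. r h \<noteq> u} = 0"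
  proof (cases "{h \<in> space M. r h \<noteq> u} \<in> sets M")
    case meas: True
    show ?thesis
    proof (cases "u \<in> H")
      case True
      then have "{h \<in> space M. r h \<noteq> u} \<inter> space (m u) = {h \<in> H. r h \<noteq> u}"
        using UM borel_prob_system_space[OF sys H] u by auto
      then show ?thesis
        using True meas sys u
        by (simp add: extend_system_def emeasure_distr borel_prob_system_id_measurable[OF sys H]
            borel_prob_system_def)
    next
      case False
      then show ?thesis using meas u units by (simp add: extend_system_def emeasure_return)
    qed
  qed (simp add: extend_system_def emeasure_notin_sets)
next
  fix f :: "'a \<Rightarrow> ennreal" assume "f \<in> borel_measurable (restrict_space M (space M))"
  then have f: "f \<in> borel_measurable M"
    unfolding measurable_cong_sets[OF sets_restrict_space_space refl] .
  have UM: "U \<subseteq> space M"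
    using U by (auto dest: sets.sets_into_space)
  have integral_eq: "(\<integral>\<^sup>+ x. f x \<partial>extend_system M H m u)
      = (if u \<in> H then \<integral>\<^sup>+ x. f x \<partial>m u else f u)"
    if "u \<in> space (restrict_space M U)" for u
    using that UM f borel_prob_system_id_measurable[OF sys H, of u]
    by (auto simp: extend_system_def space_restrict_space nn_integral_distr nn_integral_return)
  have "{u \<in> space (restrict_space M U). u \<in> H} \<in> sets (restrict_space M U)"
    using H U by (auto simp: sets_restrict_space_iff space_restrict_space)
  moreover have "restrict_space (restrict_space M U) {u. u \<in> H} = restrict_space M (H \<inter> U)"
    using H U by (subst restrict_restrict_space) (auto simp: Int_commute)
  moreover have "(\<lambda>u. \<integral>\<^sup>+ x. f x \<partial>m u) \<in> borel_measurable (restrict_space M (H \<inter> U))"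
    using sys measurable_restrict_space1[OF f] unfolding borel_prob_system_def by blast
  ultimately have "(\<lambda>u. if u \<in> H then \<integral>\<^sup>+ x. f x \<partial>m u else f u) \<in> borel_measurable (restrict_space M U)"
    by (simp add: measurable_If_restrict_space_iff measurable_restrict_space1 f)
  then show "(\<lambda>u. \<integral>\<^sup>+ x. f x \<partial>extend_system M H m u) \<in> borel_measurable (restrict_space M U)"
    by (subst measurable_cong[OF integral_eq]) auto
qed

lemma extend_system_left_invariant:
  assumes "analytic_space M" "borel_groupoid M U r s mul iv" "borel_subgroupoid M r s mul iv H"
    and sys: "borel_prob_system M r H (H \<inter> U) m"
    and inv: "\<And>A. A \<in> sets (restrict_space M H) \<Longrightarrow>
      emeasure (m (s \<gamma>)) (left_preimage r mul H (s \<gamma>) \<gamma> A) = emeasure (m (r \<gamma>)) A"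
    and \<gamma>: "\<gamma> \<in> H" and A: "A \<in> sets M"
  shows "measure (extend_system M H m (s \<gamma>)) (left_preimage r mul (space M) (s \<gamma>) \<gamma> A)
    = measure (extend_system M H m (r \<gamma>)) A"
proof -
  have G: "groupoid (space M) U r s mul iv"
    using assms(2) unfolding borel_groupoid_def by blast
  have H: "H \<in> sets M" "H \<subseteq> space M" and clos: "\<And>h. h \<in> H \<Longrightarrow> s \<gamma> = r h \<Longrightarrow> mul \<gamma> h \<in> H"
    using assms(3) \<gamma> sets.sets_into_space unfolding borel_subgroupoid_def by blast+
  note units = borel_subgroupoid_units[OF G assms(3) \<gamma>]
  have "\<gamma> \<in> space M"
    using H \<gamma> by blast
  then have "measure (extend_system M H m (s \<gamma>)) (left_preimage r mul (space M) (s \<gamma>) \<gamma> A)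
      = measure (m (s \<gamma>)) (left_preimage r mul (space M) (s \<gamma>) \<gamma> A \<inter> H)"
    using A by (simp add: measure_extend_system[OF sys H(1) units(2)] left_preimage_in_sets[OF assms(1,2)])
  also have "left_preimage r mul (space M) (s \<gamma>) \<gamma> A \<inter> H = left_preimage r mul H (s \<gamma>) \<gamma> (A \<inter> H)"
    using H clos by (auto simp: left_preimage_def)
  also have "measure (m (s \<gamma>)) \<dots> = measure (m (r \<gamma>)) (A \<inter> H)"
    using inv[of "A \<inter> H"] A unfolding measure_def sets_restrict_space by (metis Int_commute image_eqI)
  also have "\<dots> = measure (extend_system M H m (r \<gamma>)) A"
    using A by (simp add: measure_extend_system[OF sys H(1) units(1)])
  finally show ?thesis .
qed

lemma proper_subgroupoid_extends:
  assumes "analytic_space M" "borel_groupoid M U r s mul iv"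
    and "borel_subgroupoid M r s mul iv H" "proper_subgroupoid M U r s mul H"
  shows "\<exists>m. borel_prob_system M r (space M) U m \<and>
    (\<forall>\<gamma>\<in>H. \<forall>A\<in>sets M. measure (m (s \<gamma>)) (left_preimage r mul (space M) (s \<gamma>) \<gamma> A) = measure (m (r \<gamma>)) A)"
proof -
  obtain m where sys: "borel_prob_system M r H (H \<inter> U) m"
    and inv: "\<forall>\<gamma>\<in>H. \<forall>A \<in> sets (restrict_space M H).
      emeasure (m (s \<gamma>)) (left_preimage r mul H (s \<gamma>) \<gamma> A) = emeasure (m (r \<gamma>)) A"
    using assms(4) unfolding proper_subgroupoid_def by blast
  have "H \<in> sets M" "U \<in> sets M" "\<And>u. u \<in> U \<Longrightarrow> r u = u"
    using assms(2,3) unfolding borel_subgroupoid_def borel_groupoid_def groupoid_def by blast+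
  then show ?thesis
    using borel_prob_system_extend_system[OF sys] extend_system_left_invariant[OF assms(1-3) sys] inv
    by blast
qed

lemma tv_norm_eq_zero:
  assumes "\<And>A. A \<in> sets M \<Longrightarrow> \<mu> A = \<nu> A"
  shows "tv_norm M \<mu> \<nu> = 0"
  unfolding tv_norm_def using assms by (intro antisym SUP_least) (auto simp: subset_iff)

theorem lemma2p8:
  fixes M :: "'a measure" and U :: "'a set" and r s :: "'a \<Rightarrow> 'a"
    and mul :: "'a \<Rightarrow> 'a \<Rightarrow> 'a" and iv :: "'a \<Rightarrow> 'a"
    and Gn :: "nat \<Rightarrow> 'a set"
  assumes "analytic_space M"
    and "borel_groupoid M U r s mul iv"
    and "\<And>n. borel_subgroupoid M r s mul iv (Gn n)"
    and "\<And>n. proper_subgroupoid M U r s mul (Gn n)"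
    and "incseq Gn"
    and "(\<Union>n. Gn n) = space M"
  shows "borel_amenable M U r s mul"
proof -
  have "\<forall>n. \<exists>m. borel_prob_system M r (space M) U m \<and> (\<forall>\<gamma>\<in>Gn n. \<forall>A\<in>sets M.
      measure (m (s \<gamma>)) (left_preimage r mul (space M) (s \<gamma>) \<gamma> A) = measure (m (r \<gamma>)) A)"
    using proper_subgroupoid_extends[OF assms(1,2,3,4)] by (intro allI)
  from choice[OF this] obtain m where
    m: "\<forall>n. borel_prob_system M r (space M) U (m n) \<and> (\<forall>\<gamma>\<in>Gn n. \<forall>A\<in>sets M.
      measure (m n (s \<gamma>)) (left_preimage r mul (space M) (s \<gamma>) \<gamma> A) = measure (m n (r \<gamma>)) A)"
    by blast
  have "(\<lambda>n. tv_norm M (\<lambda>A. measure (m n (s \<gamma>)) (left_preimage r mul (space M) (s \<gamma>) \<gamma> A))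
      (\<lambda>A. measure (m n (r \<gamma>)) A)) \<longlonglongrightarrow> 0" if \<gamma>: "\<gamma> \<in> space M" for \<gamma>
  proof -
    obtain N where "\<gamma> \<in> Gn N"
      using \<gamma> assms(6) by blast
    then have "\<gamma> \<in> Gn n" if "N \<le> n" for n
      using assms(5) that unfolding incseq_def by blast
    then have "tv_norm M (\<lambda>A. measure (m n (s \<gamma>)) (left_preimage r mul (space M) (s \<gamma>) \<gamma> A))
        (\<lambda>A. measure (m n (r \<gamma>)) A) = 0" if "N \<le> n" for n
      using m that by (intro tv_norm_eq_zero) blast
    then show ?thesis
      by (intro tendsto_eventually eventually_sequentiallyI)
  qed
  then show ?thesis
    using m unfolding borel_amenable_def by (intro exI[of _ m] conjI allI ballI) auto
qed

end
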